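(* Let $n>2$ and let $U$ be $F_{(n_1,\dots,n_\ell)}$ with $n_1\cdots n_\ell=n$, or more generally any $n\times n$ unitary matrix all of whose first-row entries equal $1/\sqrt n$. Then: (1) The ideal heralding rate is $$h_n(0)=\left(\frac{-1}{n}\right)^{n-1}(n-1)!\sum_{t=0}^{n-1}(n-t)\frac{(-n)^t}{t!}={}_2F_0\!\left(-(n-1),2;\tfrac1n\right),$$ where ${}_2F_0(a,b;z)=\sum_{j\ge0}\frac{(a)_j(b)_j}{j!}z^j$ and $(a)_j=a(a+1)\cdots(a+j-1)$. (2) $\lim_{n\to\infty}h_n(0)=\tfrac14$.
   Context: Here $F_m=\frac1{\sqrt m}(e^{2\pi ijk/m})_{j,k}$, $F_{(n_1,\dots,n_\ell)}=F_{n_1}\otimes\cdots\otimes F_{n_\ell}$ with modes labelled so that $|m_1\rangle\otimes\cdots\otimes|m_\ell\rangle$ is mode $m_1+n_1m_2+\cdots+(n_1\cdots n_{\ell-1})m_\ell$. For an $n\times n$ unitary $U$, $\hat U$ is the induced linear optical unitary on $n$ bosons in $n$ modes ($a_j^\dagger\mapsto\sum_iU_{ij}a_i^\dagger$), and $|s_0,\dots,s_{n-1}\rangle$ denotes Fock states. An ideal pattern is $(s_0,\dots,s_{n-1})$ with $\sum s_i=n$, $s_0=1$ and $\langle s_0,\dots,s_{n-1}|\hat U|1,\dots,1\rangle\ne0$. The ideal heralding rate is $h_n(0)=\sum_{s\text{ ideal}}|\langle s|\hat U|1,\dots,1\rangle|^2$, the probability that measuring the photon numbers of $\hat U|1,\dots,1\rangle$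 in all modes yields an ideal pattern. *)

theory Defs
  imports "HOL-Analysis.Analysis" "HOL-Library.FuncSet"
begin

text \<open>An n x n complex matrix is represented as a function nat => nat => complex,
  entries U i j with i, j < n (i = row = output mode, j = column = input mode).
  Unitary: U U^* = I and U^* U = I.\<close>
definition unitary_mat :: "nat \<Rightarrow> (nat \<Rightarrow> nat \<Rightarrow> complex) \<Rightarrow> bool" where
  "unitary_mat n U \<longleftrightarrow>
     (\<forall>i<n. \<forall>j<n. (\<Sum>k<n. U i k * cnj (U j k)) = (if i = j then 1 else 0)) \<and>
     (\<forall>i<n. \<forall>j<n. (\<Sum>k<n. cnj (U k i) * U k j) = (if i = j then 1 else 0))"

text \<open>Fock-state amplitude <s_0,...,s_{n-1}| \<hat>U |1,...,1>.  Expanding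
  \<hat>U |1..1> = prod_j (sum_i U i j a_i^dagger) |0> over all assignments f of the
  input photons j to output modes f j, and using (a^dagger)^k |0> = sqrt(k!) |k>,
  the amplitude is sqrt(prod_i s_i!) times the sum over the assignments f whose
  occupation numbers are s.\<close>
definition fock_amp :: "nat \<Rightarrow> (nat \<Rightarrow> nat \<Rightarrow> complex) \<Rightarrow> (nat \<Rightarrow> nat) \<Rightarrow> complex" where
  "fock_amp n U s =
     complex_of_real (sqrt (\<Prod>i<n. fact (s i))) *
     (\<Sum>f \<in> {f \<in> {..<n} \<rightarrow>\<^sub>E {..<n}. \<forall>i<n. card {j. j < n \<and> f j = i} = s i}.
        \<Prod>j<n. U (f j) j)"

definition patterns :: "nat \<Rightarrow> (nat \<Rightarrow> nat) set" where
  "patterns n = {s. (\<forall>i\<ge>n. s i = 0) \<and> (\<Sum>i<n. s i) = n}"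

definition ideal_patterns :: "nat \<Rightarrow> (nat \<Rightarrow> nat \<Rightarrow> complex) \<Rightarrow> (nat \<Rightarrow> nat) set" where
  "ideal_patterns n U = {s \<in> patterns n. s 0 = 1 \<and> fock_amp n U s \<noteq> 0}"

definition heralding_rate :: "nat \<Rightarrow> (nat \<Rightarrow> nat \<Rightarrow> complex) \<Rightarrow> real" where
  "heralding_rate n U = (\<Sum>s \<in> ideal_patterns n U. (cmod (fock_amp n U s))\<^sup>2)"

definition hyp2F0 :: "real \<Rightarrow> real \<Rightarrow> real \<Rightarrow> real" where
  "hyp2F0 a b z = (\<Sum>j. pochhammer a j * pochhammer b j / fact j * z ^ j)"

definition dft :: "nat \<Rightarrow> nat \<Rightarrow> nat \<Rightarrow> complex" where
  "dft m j k = exp (2 * pi * \<i> * of_nat (j * k) / of_nat m) / complex_of_real (sqrt m)"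

end

theory Submission
  imports Defs "HOL-Combinatorics.Permutations" "HOL-Probability.Sinc_Integral"
begin

text \<open>
  Expanding \<open>\<hat>U |1,...,1>\<close> over the routes \<open>f\<close> (photon \<open>j\<close> leaves in mode \<open>f j\<close>), the
  stabiliser of a route with occupation \<open>s\<close> has \<open>s\<^sub>0! ... s\<^sub>n\<^sub>-\<^sub>1!\<close> elements, so the squared
  amplitude of \<open>s\<close> is the sum, over the routes \<open>f\<close> with occupation \<open>s\<close>, of the amplitude of \<open>f\<close>
  times the conjugate of the summed amplitudes of all \<open>f \<circ> \<sigma>\<close>.  Summing over the ideal patterns
  and exchanging sums, \<open>h\<^sub>n(0)\<close> becomes a sum over permutations \<open>\<sigma>\<close> and routes sending exactly
  one photon to mode \<open>0\<close>.  For fixed \<open>\<sigma>\<close> these routes factorise, and as the first row of \<open>U\<close> is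
  flat, orthonormality of the columns turns every factor into \<open>[\<sigma> k = k] - 1/n\<close>.  Expanding the
  product and counting permutations with prescribed fixed points yields
  \<open>h\<^sub>n(0) = (\<Sum>t<n. C(n-1,t) (t+1)! (-1/n)\<^sup>t)\<close>, which is both the stated closed form and the
  terminating \<open>\<^sub>2F\<^sub>0\<close>.  The same number is the integral of \<open>x exp(-x) (1 - x/n)\<^sup>n\<^sup>-\<^sup>1\<close> over
  \<open>[0, \<infinity>)\<close>, which tends to the integral of \<open>x exp(-2x)\<close>, namely \<open>1/4\<close>, by dominated convergence.
\<close>

section \<open>Maps, fibres and permutations\<close>

definition fibre :: "'a set \<Rightarrow> ('a \<Rightarrow> 'b) \<Rightarrow> 'b \<Rightarrow> 'a set" where
  "fibre A f b = {a \<in> A. f a = b}"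

lemma mem_fibre_iff [simp]: "a \<in> fibre A f b \<longleftrightarrow> a \<in> A \<and> f a = b"
  by (simp add: fibre_def)

lemma finite_fibre [simp]: "finite A \<Longrightarrow> finite (fibre A f b)"
  by (simp add: fibre_def)

lemma card_stabilizer_permutes:
  assumes A: "finite A" and B: "finite B" and f: "f ` A \<subseteq> B"
  shows "card {\<tau>. \<tau> permutes A \<and> (\<forall>a\<in>A. f (\<tau> a) = f a)} = (\<Prod>b\<in>B. fact (card (fibre A f b)))"
proof -
  let ?S = "{\<tau>. \<tau> permutes A \<and> (\<forall>a\<in>A. f (\<tau> a) = f a)}"
  let ?P = "PiE B (\<lambda>b. {\<rho>. \<rho> permutes fibre A f b})"
  let ?restrict = "\<lambda>\<tau>. \<lambda>b\<in>B. \<lambda>a. if a \<in> fibre A f b then \<tau> a else a"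
  let ?glue = "\<lambda>\<rho> a. if a \<in> A then \<rho> (f a) a else a"
  have glue_in_fibre: "\<rho> (f a) a \<in> fibre A f (f a)" if "\<rho> \<in> ?P" "a \<in> A" for \<rho> a
    using that f permutes_in_image[of "\<rho> (f a)" "fibre A f (f a)" a] by auto
  have "bij_betw ?restrict ?S ?P"
  proof (rule bij_betw_byWitness[where f' = ?glue])
    show "\<forall>\<tau>\<in>?S. ?glue (?restrict \<tau>) = \<tau>"
      using f by (auto simp: fun_eq_iff permutes_not_in)
    show "\<forall>\<rho>\<in>?P. ?restrict (?glue \<rho>) = \<rho>"
    proof
      fix \<rho> assume \<rho>: "\<rho> \<in> ?P"
      then have "\<rho> b a = a" if "b \<in> B" "a \<notin> fibre A f b" for a b
        using that by (auto intro: permutes_not_in)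
      with \<rho> show "?restrict (?glue \<rho>) = \<rho>"
        by (auto simp: fun_eq_iff PiE_def extensional_def)
    qed
    show "?restrict ` ?S \<subseteq> ?P"
    proof (rule image_subsetI, rule PiE_I)
      fix \<tau> b assume "\<tau> \<in> ?S" and "b \<in> B"
      then have \<tau>: "\<tau> permutes A" "\<forall>a\<in>A. f (\<tau> a) = f a" by auto
      have "(\<lambda>a. if a \<in> fibre A f b then \<tau> a else a) permutes fibre A f b"
        using \<tau> A permutes_inj[OF \<tau>(1)] permutes_in_image[OF \<tau>(1)]
        by (intro inj_imp_permutes) (auto simp: inj_on_def inj_def)
      with \<open>b \<in> B\<close> show "?restrict \<tau> b \<in> {\<rho>. \<rho> permutes fibre A f b}" by simp
    qed auto
    show "?glue ` ?P \<subseteq> ?S"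
    proof (rule image_subsetI)
      fix \<rho> assume \<rho>: "\<rho> \<in> ?P"
      have "inj_on (?glue \<rho>) A"
      proof (rule inj_onI)
        fix a a' assume a: "a \<in> A" "a' \<in> A" and eq: "?glue \<rho> a = ?glue \<rho> a'"
        then have "f a = f a'"
          using glue_in_fibre[OF \<rho> a(1)] glue_in_fibre[OF \<rho> a(2)] by simp
        moreover have "inj (\<rho> (f a))"
          using \<rho> a(1) f by (auto intro: permutes_inj)
        ultimately show "a = a'"
          using eq a by (simp add: inj_eq)
      qed
      then have "?glue \<rho> permutes A"
        using A glue_in_fibre[OF \<rho>] by (intro inj_imp_permutes) auto
      moreover have "\<forall>a\<in>A. f (?glue \<rho> a) = f a"
        using glue_in_fibre[OF \<rho>] by simp
      ultimately show "?glue \<rho> \<in> ?S" by simp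
    qed
  qed
  then have "card ?S = card ?P" by (rule bij_betw_same_card)
  also have "\<dots> = (\<Prod>b\<in>B. fact (card (fibre A f b)))"
    using A B by (simp add: card_PiE card_permutations)
  finally show ?thesis .
qed

lemma obtain_permutes_transport:
  assumes A: "finite A" and g: "g ` A \<subseteq> B"
    and card: "\<And>b. b \<in> B \<Longrightarrow> card (fibre A g b) = card (fibre A f b)"
  obtains \<sigma> where "\<sigma> permutes A" "\<forall>a\<in>A. f (\<sigma> a) = g a"
proof -
  have "\<forall>b\<in>B. \<exists>\<beta>. bij_betw \<beta> (fibre A g b) (fibre A f b)"
    using card A by (simp add: finite_same_card_bij)
  then obtain \<beta> where \<beta>: "\<And>b. b \<in> B \<Longrightarrow> bij_betw (\<beta> b) (fibre A g b) (fibre A f b)"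
    by (metis bchoice)
  let ?\<sigma> = "\<lambda>a. if a \<in> A then \<beta> (g a) a else a"
  have \<beta>_in_fibre: "\<beta> (g a) a \<in> fibre A f (g a)" if "a \<in> A" for a
    using that g bij_betwE[OF \<beta>] by auto
  have "inj_on ?\<sigma> A"
  proof (rule inj_onI)
    fix a a' assume a: "a \<in> A" "a' \<in> A" and eq: "?\<sigma> a = ?\<sigma> a'"
    then have "g a = g a'"
      using \<beta>_in_fibre[OF a(1)] \<beta>_in_fibre[OF a(2)] by simp
    moreover have "inj_on (\<beta> (g a)) (fibre A g (g a))"
      using \<beta> a(1) g by (auto intro: bij_betw_imp_inj_on)
    ultimately show "a = a'"
      using eq a by (auto dest: inj_onD)
  qed
  then have "?\<sigma> permutes A"
    using A \<beta>_in_fibre by (intro inj_imp_permutes) auto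
  moreover have "\<forall>a\<in>A. f (?\<sigma> a) = g a"
    using \<beta>_in_fibre by simp
  ultimately show thesis by (rule that)
qed

text \<open>The permutations carrying \<open>g\<close> to \<open>f\<close> form a coset of the stabiliser of \<open>f\<close>.\<close>

lemma card_permutes_transport:
  assumes A: "finite A" and B: "finite B" and f: "f ` A \<subseteq> B" and g: "g ` A \<subseteq> B"
    and card: "\<And>b. b \<in> B \<Longrightarrow> card (fibre A g b) = card (fibre A f b)"
  shows "card {\<sigma>. \<sigma> permutes A \<and> (\<forall>a\<in>A. f (\<sigma> a) = g a)} = (\<Prod>b\<in>B. fact (card (fibre A f b)))"
proof -
  obtain \<sigma>\<^sub>0 where \<sigma>\<^sub>0: "\<sigma>\<^sub>0 permutes A" "\<forall>a\<in>A. f (\<sigma>\<^sub>0 a) = g a"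
    using obtain_permutes_transport[OF A g card] by blast
  let ?Stab = "{\<tau>. \<tau> permutes A \<and> (\<forall>a\<in>A. f (\<tau> a) = f a)}"
  let ?G = "{\<sigma>. \<sigma> permutes A \<and> (\<forall>a\<in>A. f (\<sigma> a) = g a)}"
  have "bij_betw (\<lambda>\<tau>. \<tau> \<circ> \<sigma>\<^sub>0) ?Stab ?G"
  proof (rule bij_betw_byWitness[where f' = "\<lambda>\<sigma>. \<sigma> \<circ> inv \<sigma>\<^sub>0"])
    show "\<forall>\<tau>\<in>?Stab. \<tau> \<circ> \<sigma>\<^sub>0 \<circ> inv \<sigma>\<^sub>0 = \<tau>" "\<forall>\<sigma>\<in>?G. \<sigma> \<circ> inv \<sigma>\<^sub>0 \<circ> \<sigma>\<^sub>0 = \<sigma>"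
      using permutes_inv_o[OF \<sigma>\<^sub>0(1)] by (simp_all add: comp_assoc)
    show "(\<lambda>\<tau>. \<tau> \<circ> \<sigma>\<^sub>0) ` ?Stab \<subseteq> ?G"
      using \<sigma>\<^sub>0 by (auto intro: permutes_compose simp: permutes_in_image)
    have "f (\<sigma> (inv \<sigma>\<^sub>0 a)) = f a" if "\<sigma> \<in> ?G" "a \<in> A" for \<sigma> a
    proof -
      have "inv \<sigma>\<^sub>0 a \<in> A"
        using that(2) permutes_in_image[OF permutes_inv[OF \<sigma>\<^sub>0(1)]] by simp
      then show ?thesis
        using that(1) \<sigma>\<^sub>0(2) permutes_inverses(1)[OF \<sigma>\<^sub>0(1)] by auto
    qed
    then show "(\<lambda>\<sigma>. \<sigma> \<circ> inv \<sigma>\<^sub>0) ` ?G \<subseteq> ?Stab"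
      using permutes_inv[OF \<sigma>\<^sub>0(1)] by (auto intro: permutes_compose)
  qed
  then have "card ?G = card ?Stab" by (simp add: bij_betw_same_card)
  then show ?thesis using card_stabilizer_permutes[OF A B f] by simp
qed

lemma card_fibre_compose_permutes:
  assumes "\<sigma> permutes A"
  shows "card (fibre A (f \<circ> \<sigma>) b) = card (fibre A f b)"
proof -
  have "fibre A (f \<circ> \<sigma>) b = \<sigma> -` fibre A f b"
    using permutes_in_image[OF assms] by auto
  then show ?thesis
    using assms by (simp add: card_vimage_inj permutes_inj permutes_surj)
qed

lemma compose_permutes_in_PiE:
  assumes "f \<in> A \<rightarrow>\<^sub>E B" and "\<sigma> permutes A"
  shows "f \<circ> \<sigma> \<in> A \<rightarrow>\<^sub>E B"
  using assms by (auto simp: PiE_def extensional_def permutes_in_image permutes_not_in)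

text \<open>Every map with the same fibre sizes as \<open>f\<close> is \<open>f \<circ> \<sigma>\<close> for exactly as many \<open>\<sigma>\<close> as the
  stabiliser of \<open>f\<close> has elements.\<close>

lemma sum_permutes_compose:
  fixes P :: "('a \<Rightarrow> 'b) \<Rightarrow> 'c::comm_semiring_1"
  assumes A: "finite A" and B: "finite B" and f: "f \<in> A \<rightarrow>\<^sub>E B"
  shows "(\<Sum>\<sigma> | \<sigma> permutes A. P (f \<circ> \<sigma>)) =
    of_nat (\<Prod>b\<in>B. fact (card (fibre A f b))) *
    (\<Sum>g \<in> {g \<in> A \<rightarrow>\<^sub>E B. \<forall>b\<in>B. card (fibre A g b) = card (fibre A f b)}. P g)"
proof -
  let ?Orb = "{g \<in> A \<rightarrow>\<^sub>E B. \<forall>b\<in>B. card (fibre A g b) = card (fibre A f b)}"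
  have "finite (A \<rightarrow>\<^sub>E B)"
    using A B by (simp add: finite_PiE)
  then have "finite ?Orb"
    by (rule finite_subset[rotated]) blast
  have "f \<circ> \<sigma> \<in> ?Orb" if "\<sigma> permutes A" for \<sigma>
    using compose_permutes_in_PiE[OF f that] card_fibre_compose_permutes[OF that, of f] by simp
  then have "(\<lambda>\<sigma>. f \<circ> \<sigma>) ` {\<sigma>. \<sigma> permutes A} \<subseteq> ?Orb"
    by blast
  then have "(\<Sum>\<sigma> | \<sigma> permutes A. P (f \<circ> \<sigma>)) =
      (\<Sum>g\<in>?Orb. \<Sum>\<sigma> | \<sigma> permutes A \<and> f \<circ> \<sigma> = g. P (f \<circ> \<sigma>))"
    using sum.group[OF finite_permutations[OF A] \<open>finite ?Orb\<close>, of "\<lambda>\<sigma>. f \<circ> \<sigma>" "\<lambda>\<sigma>. P (f \<circ> \<sigma>)"]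
    by simp
  also have "\<dots> = (\<Sum>g\<in>?Orb. of_nat (\<Prod>b\<in>B. fact (card (fibre A f b))) * P g)"
  proof (rule sum.cong[OF refl])
    fix g assume g: "g \<in> ?Orb"
    then have gE: "g \<in> A \<rightarrow>\<^sub>E B" by simp
    have "f \<circ> \<sigma> = g \<longleftrightarrow> (\<forall>a\<in>A. f (\<sigma> a) = g a)" if "\<sigma> permutes A" for \<sigma>
    proof -
      have "f (\<sigma> a) = g a" if "a \<notin> A" for a
        using permutes_not_in[OF \<open>\<sigma> permutes A\<close> that] PiE_arb[OF f that] PiE_arb[OF gE that]
        by simp
      then show ?thesis
        by (auto simp: fun_eq_iff)
    qed
    then have "{\<sigma>. \<sigma> permutes A \<and> f \<circ> \<sigma> = g} = {\<sigma>. \<sigma> permutes A \<and> (\<forall>a\<in>A. f (\<sigma> a) = g a)}"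
      by blast
    also have "card \<dots> = (\<Prod>b\<in>B. fact (card (fibre A f b)))"
      using f g by (intro card_permutes_transport[OF A B]) auto
    finally have card: "card {\<sigma>. \<sigma> permutes A \<and> f \<circ> \<sigma> = g} = (\<Prod>b\<in>B. fact (card (fibre A f b)))" .
    have "(\<Sum>\<sigma> | \<sigma> permutes A \<and> f \<circ> \<sigma> = g. P (f \<circ> \<sigma>)) = (\<Sum>\<sigma> | \<sigma> permutes A \<and> f \<circ> \<sigma> = g. P g)"
      by (rule sum.cong) auto
    also have "\<dots> = of_nat (\<Prod>b\<in>B. fact (card (fibre A f b))) * P g"
      by (simp only: sum_constant card of_nat_mult)
    finally show "(\<Sum>\<sigma> | \<sigma> permutes A \<and> f \<circ> \<sigma> = g. P (f \<circ> \<sigma>)) =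
        of_nat (\<Prod>b\<in>B. fact (card (fibre A f b))) * P g" .
  qed
  finally show ?thesis by (simp add: sum_distrib_left)
qed

lemma sum_card_fibre:
  assumes "finite A" "finite B" "f ` A \<subseteq> B"
  shows "(\<Sum>b\<in>B. card (fibre A f b)) = card A"
  using sum.group[OF assms, of "\<lambda>_. 1::nat"] by (simp add: fibre_def)

lemma sum_PiE_unique_preimage:
  fixes w :: "'a \<Rightarrow> 'b \<Rightarrow> 'c::comm_semiring_1"
  assumes A: "finite A" and B: "finite B" and b\<^sub>0: "b\<^sub>0 \<in> B"
  shows "(\<Sum>f \<in> {f \<in> A \<rightarrow>\<^sub>E B. card (fibre A f b\<^sub>0) = 1}. \<Prod>a\<in>A. w a (f a)) =
    (\<Sum>a\<^sub>0\<in>A. w a\<^sub>0 b\<^sub>0 * (\<Prod>a \<in> A - {a\<^sub>0}. \<Sum>b \<in> B - {b\<^sub>0}. w a b))"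
proof -
  define C :: "'a \<Rightarrow> 'a \<Rightarrow> 'b set" where "C a\<^sub>0 a = (if a = a\<^sub>0 then {b\<^sub>0} else B - {b\<^sub>0})" for a\<^sub>0 a
  have C_sub: "C a\<^sub>0 a \<subseteq> B" for a\<^sub>0 a
    using b\<^sub>0 by (auto simp: C_def)
  have "f \<in> {f \<in> A \<rightarrow>\<^sub>E B. card (fibre A f b\<^sub>0) = 1} \<longleftrightarrow> f \<in> (\<Union>a\<^sub>0\<in>A. PiE A (C a\<^sub>0))" for f
  proof
    assume f: "f \<in> {f \<in> A \<rightarrow>\<^sub>E B. card (fibre A f b\<^sub>0) = 1}"
    then obtain a\<^sub>0 where "fibre A f b\<^sub>0 = {a\<^sub>0}"
      by (auto simp: card_1_singleton_iff)
    then have "a\<^sub>0 \<in> A" "f \<in> PiE A (C a\<^sub>0)"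
      using f by (auto simp: C_def PiE_def Pi_def set_eq_iff)
    then show "f \<in> (\<Union>a\<^sub>0\<in>A. PiE A (C a\<^sub>0))" by blast
  next
    assume "f \<in> (\<Union>a\<^sub>0\<in>A. PiE A (C a\<^sub>0))"
    then obtain a\<^sub>0 where "a\<^sub>0 \<in> A" "f \<in> PiE A (C a\<^sub>0)" by blast
    moreover from this have "fibre A f b\<^sub>0 = {a\<^sub>0}"
      by (auto simp: C_def PiE_def Pi_def split: if_splits)
    moreover have "PiE A (C a\<^sub>0) \<subseteq> A \<rightarrow>\<^sub>E B"
      using C_sub by (rule PiE_mono)
    ultimately show "f \<in> {f \<in> A \<rightarrow>\<^sub>E B. card (fibre A f b\<^sub>0) = 1}"
      by auto
  qed
  then have S: "{f \<in> A \<rightarrow>\<^sub>E B. card (fibre A f b\<^sub>0) = 1} = (\<Union>a\<^sub>0\<in>A. PiE A (C a\<^sub>0))"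
    by (rule set_eqI)
  have disjoint: "PiE A (C a\<^sub>0) \<inter> PiE A (C a\<^sub>1) = {}" if "a\<^sub>0 \<in> A" "a\<^sub>0 \<noteq> a\<^sub>1" for a\<^sub>0 a\<^sub>1
    using that by (auto simp: C_def PiE_def Pi_def)
  have "(\<Sum>f \<in> {f \<in> A \<rightarrow>\<^sub>E B. card (fibre A f b\<^sub>0) = 1}. \<Prod>a\<in>A. w a (f a)) =
      (\<Sum>a\<^sub>0\<in>A. \<Sum>f \<in> PiE A (C a\<^sub>0). \<Prod>a\<in>A. w a (f a))"
    unfolding S using A B disjoint
    by (intro sum.UNION_disjoint) (auto simp: C_def finite_PiE)
  also have "\<dots> = (\<Sum>a\<^sub>0\<in>A. \<Prod>a\<in>A. \<Sum>b \<in> C a\<^sub>0 a. w a b)"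
    using A B by (intro sum.cong refl prod_sum_PiE[symmetric]) (auto simp: C_def)
  also have "\<dots> = (\<Sum>a\<^sub>0\<in>A. w a\<^sub>0 b\<^sub>0 * (\<Prod>a \<in> A - {a\<^sub>0}. \<Sum>b \<in> B - {b\<^sub>0}. w a b))"
  proof (rule sum.cong[OF refl])
    fix a\<^sub>0 assume "a\<^sub>0 \<in> A"
    then have "(\<Prod>a\<in>A. \<Sum>b \<in> C a\<^sub>0 a. w a b) = (\<Sum>b \<in> C a\<^sub>0 a\<^sub>0. w a\<^sub>0 b) * (\<Prod>a \<in> A - {a\<^sub>0}. \<Sum>b \<in> C a\<^sub>0 a. w a b)"
      by (rule prod.remove[OF A])
    also have "\<dots> = w a\<^sub>0 b\<^sub>0 * (\<Prod>a \<in> A - {a\<^sub>0}. \<Sum>b \<in> B - {b\<^sub>0}. w a b)"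
      by (simp add: C_def)
    finally show "(\<Prod>a\<in>A. \<Sum>b \<in> C a\<^sub>0 a. w a b) = w a\<^sub>0 b\<^sub>0 * (\<Prod>a \<in> A - {a\<^sub>0}. \<Sum>b \<in> B - {b\<^sub>0}. w a b)" .
  qed
  finally show ?thesis .
qed

lemma prod_of_bool:
  "finite A \<Longrightarrow> (\<Prod>x\<in>A. of_bool (P x) :: 'a::comm_semiring_1) = of_bool (\<forall>x\<in>A. P x)"
  by (induction A rule: finite_induct) auto

lemma card_permutes_fixing:
  assumes "finite A" "X \<subseteq> A"
  shows "card {\<sigma>. \<sigma> permutes A \<and> (\<forall>x\<in>X. \<sigma> x = x)} = fact (card A - card X)"
proof -
  have "{\<sigma>. \<sigma> permutes A \<and> (\<forall>x\<in>X. \<sigma> x = x)} = {\<sigma>. \<sigma> permutes (A - X)}"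
    using assms(2) by (auto simp: permutes_def)
  then show ?thesis
    using assms by (simp add: card_permutations card_Diff_subset finite_subset)
qed

lemma sum_Pow_card:
  fixes h :: "nat \<Rightarrow> 'a::comm_semiring_1"
  assumes "finite M"
  shows "(\<Sum>X\<in>Pow M. h (card X)) = (\<Sum>m\<le>card M. of_nat (card M choose m) * h m)"
proof -
  have "card ` Pow M \<subseteq> {..card M}"
    using assms by (auto intro: card_mono)
  then have "(\<Sum>X\<in>Pow M. h (card X)) = (\<Sum>m\<le>card M. \<Sum>X | X \<subseteq> M \<and> card X = m. h (card X))"
    using assms by (subst sum.group[symmetric]) auto
  also have "\<dots> = (\<Sum>m\<le>card M. of_nat (card M choose m) * h m)"
    using assms by (simp add: n_subsets)
  finally show ?thesis .
qed

lemma sum_permutes_prod_fixpoints: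
  fixes c :: "'a::comm_ring_1"
  assumes A: "finite A" and M: "M \<subseteq> A"
  shows "(\<Sum>\<sigma> | \<sigma> permutes A. \<Prod>k\<in>M. of_bool (\<sigma> k = k) + c) =
    (\<Sum>m\<le>card M. of_nat (card M choose m) * of_nat (fact (card A - m)) * c ^ (card M - m))"
proof -
  have "finite M" using A M by (rule finite_subset[rotated])
  have "(\<Sum>\<sigma> | \<sigma> permutes A. \<Prod>k\<in>M. of_bool (\<sigma> k = k) + c) =
      (\<Sum>\<sigma> | \<sigma> permutes A. \<Sum>X\<in>Pow M. of_bool (\<forall>k\<in>X. \<sigma> k = k) * c ^ (card M - card X))"
    using \<open>finite M\<close>
    by (intro sum.cong refl) (simp add: prod_add prod_of_bool finite_subset card_Diff_subset)
  also have "\<dots> = (\<Sum>X\<in>Pow M. \<Sum>\<sigma> | \<sigma> permutes A. of_bool (\<forall>k\<in>X. \<sigma> k = k) * c ^ (card M - card X))"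
    by (rule sum.swap)
  also have "\<dots> = (\<Sum>X\<in>Pow M. of_nat (fact (card A - card X)) * c ^ (card M - card X))"
  proof (rule sum.cong[OF refl])
    fix X assume "X \<in> Pow M"
    then have "card {\<sigma>. \<sigma> permutes A \<and> (\<forall>k\<in>X. \<sigma> k = k)} = fact (card A - card X)"
      using A M by (intro card_permutes_fixing) auto
    then show "(\<Sum>\<sigma> | \<sigma> permutes A. of_bool (\<forall>k\<in>X. \<sigma> k = k) * c ^ (card M - card X)) =
        of_nat (fact (card A - card X)) * c ^ (card M - card X)"
      using A by (simp add: finite_permutations Collect_conj_eq Int_commute)
  qed
  also have "\<dots> = (\<Sum>m\<le>card M. of_nat (card M choose m) * of_nat (fact (card A - m)) * c ^ (card M - m))"
    using sum_Pow_card[OF \<open>finite M\<close>, of "\<lambda>m. of_nat (fact (card A - m)) * c ^ (card M - m)"]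
    by (simp add: mult.assoc)
  finally show ?thesis .
qed

section \<open>Fock amplitudes as sums over routes\<close>

definition route_amp :: "nat \<Rightarrow> (nat \<Rightarrow> nat \<Rightarrow> complex) \<Rightarrow> (nat \<Rightarrow> nat) \<Rightarrow> complex" where
  "route_amp n U f = (\<Prod>j<n. U (f j) j)"

lemma fock_amp_norm_squared:
  "complex_of_real ((cmod (fock_amp n U s))\<^sup>2) =
    (\<Sum>f \<in> {f \<in> {..<n} \<rightarrow>\<^sub>E {..<n}. \<forall>i<n. card (fibre {..<n} f i) = s i}.
      route_amp n U f * cnj (\<Sum>\<sigma> | \<sigma> permutes {..<n}. route_amp n U (f \<circ> \<sigma>)))"
proof -
  let ?C = "{f \<in> {..<n} \<rightarrow>\<^sub>E {..<n}. \<forall>i<n. card (fibre {..<n} f i) = s i}"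
  define c :: real where "c = (\<Prod>i<n. fact (s i))"
  define A where "A = (\<Sum>f\<in>?C. route_amp n U f)"
  have amp: "fock_amp n U s = complex_of_real (sqrt c) * A"
    by (simp add: fock_amp_def route_amp_def c_def A_def fibre_def)
  have "0 \<le> c"
    by (simp add: c_def prod_nonneg)
  have "complex_of_real ((cmod (fock_amp n U s))\<^sup>2) = fock_amp n U s * cnj (fock_amp n U s)"
    by (rule complex_norm_square)
  also have "\<dots> = (complex_of_real (sqrt c) * complex_of_real (sqrt c)) * (A * cnj A)"
    by (simp only: amp complex_cnj_mult complex_cnj_complex_of_real mult_ac)
  also have "complex_of_real (sqrt c) * complex_of_real (sqrt c) = complex_of_real c"
    using \<open>0 \<le> c\<close> by (simp flip: of_real_mult)
  also have "complex_of_real c * (A * cnj A) = A * cnj (complex_of_real c * A)"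
    by (simp add: mult_ac)
  also have "\<dots> = (\<Sum>f\<in>?C. route_amp n U f * cnj (complex_of_real c * A))"
    by (simp add: A_def sum_distrib_right)
  also have "\<dots> = (\<Sum>f\<in>?C. route_amp n U f * cnj (\<Sum>\<sigma> | \<sigma> permutes {..<n}. route_amp n U (f \<circ> \<sigma>)))"
  proof (rule sum.cong[OF refl])
    fix f assume f: "f \<in> ?C"
    then have "?C = {g \<in> {..<n} \<rightarrow>\<^sub>E {..<n}. \<forall>i<n. card (fibre {..<n} g i) = card (fibre {..<n} f i)}"
      by auto
    moreover have "c = of_nat (\<Prod>i<n. fact (card (fibre {..<n} f i)))"
      using f by (simp add: c_def)
    ultimately have "complex_of_real c * A = (\<Sum>\<sigma> | \<sigma> permutes {..<n}. route_amp n U (f \<circ> \<sigma>))"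
      using f sum_permutes_compose[of "{..<n}" "{..<n}" f "route_amp n U"] by (simp add: A_def Ball_def)
    then show "route_amp n U f * cnj (complex_of_real c * A) =
        route_amp n U f * cnj (\<Sum>\<sigma> | \<sigma> permutes {..<n}. route_amp n U (f \<circ> \<sigma>))"
      by simp
  qed
  finally show ?thesis .
qed

lemma finite_patterns: "finite (patterns n)"
proof -
  let ?extend = "\<lambda>g i. if i < n then g i else 0"
  have "patterns n \<subseteq> ?extend ` ({..<n} \<rightarrow>\<^sub>E {..n})"
  proof
    fix s assume s: "s \<in> patterns n"
    then have "s i \<le> n" if "i < n" for i
      using that member_le_sum[of i "{..<n}" s] by (auto simp: patterns_def)
    then have "restrict s {..<n} \<in> {..<n} \<rightarrow>\<^sub>E {..n}"
      by auto
    moreover have "s = ?extend (restrict s {..<n})"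
      using s by (auto simp: patterns_def fun_eq_iff)
    ultimately show "s \<in> ?extend ` ({..<n} \<rightarrow>\<^sub>E {..n})"
      by blast
  qed
  then show ?thesis
    by (rule finite_subset) (simp add: finite_PiE)
qed

lemma heralding_rate_sum_routes:
  assumes "0 < n"
  shows "complex_of_real (heralding_rate n U) =
    (\<Sum>f \<in> {f \<in> {..<n} \<rightarrow>\<^sub>E {..<n}. card (fibre {..<n} f 0) = 1}.
      route_amp n U f * cnj (\<Sum>\<sigma> | \<sigma> permutes {..<n}. route_amp n U (f \<circ> \<sigma>)))"
proof -
  define Q where "Q = {s \<in> patterns n. s 0 = 1}"
  define S where "S = {f \<in> {..<n} \<rightarrow>\<^sub>E {..<n}. card (fibre {..<n} f 0) = 1}"
  define occupation :: "(nat \<Rightarrow> nat) \<Rightarrow> nat \<Rightarrow> nat"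
    where "occupation f i = (if i < n then card (fibre {..<n} f i) else 0)" for f i
  let ?term = "\<lambda>f. route_amp n U f * cnj (\<Sum>\<sigma> | \<sigma> permutes {..<n}. route_amp n U (f \<circ> \<sigma>))"
  have "finite Q"
    using finite_patterns by (simp add: Q_def)
  have "finite S"
    unfolding S_def by (rule finite_subset[of _ "{..<n} \<rightarrow>\<^sub>E {..<n}"]) (auto simp: finite_PiE)
  have "occupation ` S \<subseteq> Q"
  proof
    fix s assume "s \<in> occupation ` S"
    then obtain f where f: "f \<in> S" "s = occupation f" by blast
    then have "(\<Sum>i<n. s i) = n"
      using sum_card_fibre[of "{..<n}" "{..<n}" f] by (auto simp: S_def occupation_def)
    with f assms show "s \<in> Q"
      by (simp add: Q_def S_def occupation_def patterns_def)
  qed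
  have "heralding_rate n U = (\<Sum>s\<in>Q. (cmod (fock_amp n U s))\<^sup>2)"
    unfolding heralding_rate_def using \<open>finite Q\<close>
    by (intro sum.mono_neutral_left) (auto simp: ideal_patterns_def Q_def)
  then have "complex_of_real (heralding_rate n U) = (\<Sum>s\<in>Q. complex_of_real ((cmod (fock_amp n U s))\<^sup>2))"
    by simp
  also have "\<dots> = (\<Sum>s\<in>Q. \<Sum>f \<in> {f \<in> S. occupation f = s}. ?term f)"
  proof (rule sum.cong[OF refl])
    fix s assume "s \<in> Q"
    then have "{f \<in> S. occupation f = s} =
        {f \<in> {..<n} \<rightarrow>\<^sub>E {..<n}. \<forall>i<n. card (fibre {..<n} f i) = s i}"
      using assms by (auto simp: Q_def S_def occupation_def patterns_def fun_eq_iff)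
    then show "complex_of_real ((cmod (fock_amp n U s))\<^sup>2) = (\<Sum>f \<in> {f \<in> S. occupation f = s}. ?term f)"
      using fock_amp_norm_squared[of n U s] by simp
  qed
  also have "\<dots> = (\<Sum>f\<in>S. ?term f)"
    by (rule sum.group[OF \<open>finite S\<close> \<open>finite Q\<close> \<open>occupation ` S \<subseteq> Q\<close>])
  finally show ?thesis
    by (simp add: S_def)
qed

section \<open>Unitaries with a flat first row\<close>

lemma unitary_mat_columns_orthonormal:
  assumes "unitary_mat n U" "k < n" "m < n"
  shows "(\<Sum>i<n. U i k * cnj (U i m)) = of_bool (k = m)"
proof -
  have "(\<Sum>i<n. cnj (U i m) * U i k) = of_bool (m = k)"
    using assms unfolding unitary_mat_def by (simp add: of_bool_def)
  then show ?thesis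
    by (auto simp: mult.commute)
qed

lemma flat_row_mult_cnj:
  fixes U :: "nat \<Rightarrow> nat \<Rightarrow> complex"
  assumes row: "\<forall>k<n. U 0 k = complex_of_real (1 / sqrt (real n))" and "k < n" "m < n"
  shows "U 0 k * cnj (U 0 m) = 1 / of_nat n"
proof -
  have entries: "U 0 k = complex_of_real (1 / sqrt (real n))" "U 0 m = complex_of_real (1 / sqrt (real n))"
    using assms by auto
  have "U 0 k * cnj (U 0 m) = complex_of_real (1 / sqrt (real n) * (1 / sqrt (real n)))"
    unfolding entries complex_cnj_complex_of_real of_real_mult ..
  also have "1 / sqrt (real n) * (1 / sqrt (real n)) = 1 / real n"
    using assms by (simp add: real_sqrt_mult[symmetric])
  finally show ?thesis by simp
qed

lemma flat_row_sum_other_rows: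
  assumes U: "unitary_mat n U" and row: "\<forall>k<n. U 0 k = complex_of_real (1 / sqrt (real n))"
    and k: "k < n" and m: "m < n"
  shows "(\<Sum>i \<in> {..<n} - {0}. U i k * cnj (U i m)) = of_bool (k = m) - 1 / of_nat n"
proof -
  have "(\<Sum>i<n. U i k * cnj (U i m)) = U 0 k * cnj (U 0 m) + (\<Sum>i \<in> {..<n} - {0}. U i k * cnj (U i m))"
    using k by (intro sum.remove) auto
  then show ?thesis
    using unitary_mat_columns_orthonormal[OF U k m] flat_row_mult_cnj[where U = U, OF row k m] by simp
qed

lemma route_amp_mult_cnj_compose:
  assumes "\<sigma> permutes {..<n}"
  shows "route_amp n U f * cnj (route_amp n U (f \<circ> \<sigma>)) = (\<Prod>k<n. U (f k) k * cnj (U (f k) (inv \<sigma> k)))"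
proof -
  have "(\<Prod>k<n. cnj (U (f k) (inv \<sigma> k))) = (\<Prod>j<n. cnj (U (f (\<sigma> j)) (inv \<sigma> (\<sigma> j))))"
    by (rule prod.permute[OF assms, unfolded comp_def])
  also have "\<dots> = cnj (route_amp n U (f \<circ> \<sigma>))"
    using permutes_inverses(2)[OF assms] by (simp add: route_amp_def)
  finally show ?thesis
    by (simp add: route_amp_def prod.distrib)
qed

lemma sum_routes_flat_row:
  assumes U: "unitary_mat n U" and row: "\<forall>k<n. U 0 k = complex_of_real (1 / sqrt (real n))"
    and n: "0 < n" and \<sigma>: "\<sigma> permutes {..<n}"
  shows "(\<Sum>f \<in> {f \<in> {..<n} \<rightarrow>\<^sub>E {..<n}. card (fibre {..<n} f 0) = 1}.
            route_amp n U f * cnj (route_amp n U (f \<circ> \<sigma>))) =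
    (\<Sum>a\<^sub>0<n. \<Prod>k \<in> {..<n} - {a\<^sub>0}. of_bool (\<sigma> k = k) - 1 / of_nat n) / of_nat n"
proof -
  define w where "w k i = U i k * cnj (U i (inv \<sigma> k))" for k i
  have inv_\<sigma>: "inv \<sigma> k < n" if "k < n" for k
    using that permutes_in_image[OF permutes_inv[OF \<sigma>]] by simp
  have fixpoint: "k = inv \<sigma> k \<longleftrightarrow> \<sigma> k = k" for k
    using permutes_inverses[OF \<sigma>] by metis
  have "(\<Sum>f \<in> {f \<in> {..<n} \<rightarrow>\<^sub>E {..<n}. card (fibre {..<n} f 0) = 1}.
            route_amp n U f * cnj (route_amp n U (f \<circ> \<sigma>))) =
      (\<Sum>f \<in> {f \<in> {..<n} \<rightarrow>\<^sub>E {..<n}. card (fibre {..<n} f 0) = 1}. \<Prod>k<n. w k (f k))"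
    by (simp add: route_amp_mult_cnj_compose[OF \<sigma>] w_def)
  also have "\<dots> = (\<Sum>a\<^sub>0<n. w a\<^sub>0 0 * (\<Prod>k \<in> {..<n} - {a\<^sub>0}. \<Sum>i \<in> {..<n} - {0}. w k i))"
    using n by (intro sum_PiE_unique_preimage) auto
  also have "\<dots> = (\<Sum>a\<^sub>0<n. 1 / of_nat n * (\<Prod>k \<in> {..<n} - {a\<^sub>0}. of_bool (\<sigma> k = k) - 1 / of_nat n))"
  proof (rule sum.cong[OF refl])
    fix a\<^sub>0 assume a\<^sub>0: "a\<^sub>0 \<in> {..<n}"
    have "w a\<^sub>0 0 = 1 / of_nat n"
      using a\<^sub>0 inv_\<sigma> by (simp add: w_def flat_row_mult_cnj[where U = U, OF row])
    moreover have "(\<Sum>i \<in> {..<n} - {0}. w k i) = of_bool (\<sigma> k = k) - 1 / of_nat n"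
      if "k \<in> {..<n} - {a\<^sub>0}" for k
      using that inv_\<sigma> fixpoint flat_row_sum_other_rows[OF U row] by (simp add: w_def)
    ultimately show "w a\<^sub>0 0 * (\<Prod>k \<in> {..<n} - {a\<^sub>0}. \<Sum>i \<in> {..<n} - {0}. w k i) =
        1 / of_nat n * (\<Prod>k \<in> {..<n} - {a\<^sub>0}. of_bool (\<sigma> k = k) - 1 / of_nat n)"
      by simp
  qed
  also have "\<dots> = (\<Sum>a\<^sub>0<n. \<Prod>k \<in> {..<n} - {a\<^sub>0}. of_bool (\<sigma> k = k) - 1 / of_nat n) / of_nat n"
    by (simp add: sum_divide_distrib)
  finally show ?thesis .
qed

definition ideal_rate :: "nat \<Rightarrow> real" where
  "ideal_rate n = (\<Sum>t<n. real ((n - 1) choose t) * of_nat (fact (t + 1)) * (- 1 / real n) ^ t)"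

lemma sum_choose_fact_reflect:
  fixes c :: "'a::comm_semiring_1"
  shows "(\<Sum>m<n. of_nat ((n - 1) choose m) * of_nat (fact (n - m)) * c ^ (n - 1 - m)) =
    (\<Sum>t<n. of_nat ((n - 1) choose t) * of_nat (fact (t + 1)) * c ^ t)"
proof -
  have "(\<Sum>m<n. of_nat ((n - 1) choose m) * of_nat (fact (n - m)) * c ^ (n - 1 - m)) =
      (\<Sum>t<n. of_nat ((n - 1) choose (n - Suc t)) * of_nat (fact (n - (n - Suc t))) * c ^ (n - 1 - (n - Suc t)))"
    by (rule sum.nat_diff_reindex[symmetric])
  also have "\<dots> = (\<Sum>t<n. of_nat ((n - 1) choose t) * of_nat (fact (t + 1)) * c ^ t)"
  proof (rule sum.cong[OF refl])
    fix t assume "t \<in> {..<n}"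
    then have "(n - 1) choose (n - Suc t) = (n - 1) choose t" "n - (n - Suc t) = t + 1" "n - 1 - (n - Suc t) = t"
      using binomial_symmetric[of t "n - 1"] by auto
    then show "of_nat ((n - 1) choose (n - Suc t)) * of_nat (fact (n - (n - Suc t))) * c ^ (n - 1 - (n - Suc t)) =
        of_nat ((n - 1) choose t) * of_nat (fact (t + 1)) * c ^ t"
      by simp
  qed
  finally show ?thesis .
qed

lemma heralding_rate_flat_row:
  assumes U: "unitary_mat n U" and row: "\<forall>k<n. U 0 k = complex_of_real (1 / sqrt (real n))"
    and n: "0 < n"
  shows "heralding_rate n U = ideal_rate n"
proof -
  let ?S = "{f \<in> {..<n} \<rightarrow>\<^sub>E {..<n}. card (fibre {..<n} f 0) = 1}"
  define c :: complex where "c = - 1 / of_nat n"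
  have "complex_of_real (heralding_rate n U) =
      (\<Sum>f\<in>?S. route_amp n U f * cnj (\<Sum>\<sigma> | \<sigma> permutes {..<n}. route_amp n U (f \<circ> \<sigma>)))"
    by (rule heralding_rate_sum_routes[OF n])
  also have "\<dots> = (\<Sum>\<sigma> | \<sigma> permutes {..<n}. \<Sum>f\<in>?S. route_amp n U f * cnj (route_amp n U (f \<circ> \<sigma>)))"
    by (simp add: sum_distrib_left) (rule sum.swap)
  also have "\<dots> = (\<Sum>\<sigma> | \<sigma> permutes {..<n}. (\<Sum>a\<^sub>0<n. \<Prod>k \<in> {..<n} - {a\<^sub>0}. of_bool (\<sigma> k = k) + c) / of_nat n)"
    using sum_routes_flat_row[OF U row n] by (intro sum.cong refl) (simp add: c_def)
  also have "\<dots> = (\<Sum>a\<^sub>0<n. \<Sum>\<sigma> | \<sigma> permutes {..<n}. \<Prod>k \<in> {..<n} - {a\<^sub>0}. of_bool (\<sigma> k = k) + c) / of_nat n"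
    by (subst sum.swap) (simp add: sum_divide_distrib)
  also have "\<dots> = (\<Sum>a\<^sub>0<n. \<Sum>m<n. of_nat ((n - 1) choose m) * of_nat (fact (n - m)) * c ^ (n - 1 - m)) / of_nat n"
  proof -
    have "{..n - 1} = {..<n}" using n by auto
    then have "(\<Sum>\<sigma> | \<sigma> permutes {..<n}. \<Prod>k \<in> {..<n} - {a\<^sub>0}. of_bool (\<sigma> k = k) + c) =
        (\<Sum>m<n. of_nat ((n - 1) choose m) * of_nat (fact (n - m)) * c ^ (n - 1 - m))" if "a\<^sub>0 < n" for a\<^sub>0
      using sum_permutes_prod_fixpoints[of "{..<n}" "{..<n} - {a\<^sub>0}" c] that by simp
    then show ?thesis by simp
  qed
  also have "\<dots> = (\<Sum>m<n. of_nat ((n - 1) choose m) * of_nat (fact (n - m)) * c ^ (n - 1 - m))"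
    using n by simp
  also have "\<dots> = (\<Sum>t<n. of_nat ((n - 1) choose t) * of_nat (fact (t + 1)) * c ^ t)"
    by (rule sum_choose_fact_reflect)
  also have "\<dots> = complex_of_real (ideal_rate n)"
    by (simp add: ideal_rate_def c_def)
  finally show ?thesis
    by (simp only: of_real_eq_iff)
qed

section \<open>Closed forms\<close>

lemma ideal_rate_closed_form:
  assumes n: "0 < n"
  shows "ideal_rate n = (- 1 / real n) ^ (n - 1) * fact (n - 1) * (\<Sum>t<n. real (n - t) * (- real n) ^ t / fact t)"
proof -
  have "(\<Sum>t<n. real (n - t) * (- real n) ^ t / fact t) =
      (\<Sum>t<n. real (n - (n - Suc t)) * (- real n) ^ (n - Suc t) / fact (n - Suc t))"
    by (rule sum.nat_diff_reindex[symmetric])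
  also have "\<dots> = (\<Sum>t<n. real (t + 1) * (- real n) ^ (n - 1 - t) / fact (n - 1 - t))"
    by (intro sum.cong refl) (auto simp: Suc_diff_Suc)
  finally have reflected: "(\<Sum>t<n. real (n - t) * (- real n) ^ t / fact t) = \<dots>" .
  have termwise: "(- 1 / real n) ^ (n - 1) * fact (n - 1) * (real (t + 1) * (- real n) ^ (n - 1 - t) / fact (n - 1 - t)) =
      real ((n - 1) choose t) * fact (t + 1) * (- 1 / real n) ^ t" if "t < n" for t
  proof -
    have "(- 1 / real n) ^ (n - 1) = (- 1 / real n) ^ t * (- 1 / real n) ^ (n - 1 - t)"
      using that by (simp flip: power_add)
    moreover have "(- 1 / real n) ^ (n - 1 - t) * (- real n) ^ (n - 1 - t) = 1"
      using n by (simp flip: power_mult_distrib)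
    moreover have "fact (n - 1) = real ((n - 1) choose t) * fact t * fact (n - 1 - t)"
    proof -
      have "fact t * fact (n - 1 - t) * ((n - 1) choose t) = (fact (n - 1) :: nat)"
        using that by (intro binomial_fact_lemma) auto
      then have "real (fact t * fact (n - 1 - t) * ((n - 1) choose t)) = fact (n - 1)"
        by (simp only: of_nat_fact)
      then show ?thesis
        by (simp add: mult_ac)
    qed
    ultimately show ?thesis
      by (simp add: field_simps)
  qed
  have "ideal_rate n =
      (\<Sum>t<n. (- 1 / real n) ^ (n - 1) * fact (n - 1) * (real (t + 1) * (- real n) ^ (n - 1 - t) / fact (n - 1 - t)))"
    unfolding ideal_rate_def of_nat_fact by (rule sum.cong[OF refl], rule termwise[symmetric]) simp
  then show ?thesis
    unfolding reflected by (simp only: sum_distrib_left)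
qed

lemma pochhammer_two: "pochhammer (2 :: 'a::{comm_semiring_1, semiring_char_0}) j = fact (j + 1)"
  using pochhammer_rec[of "1 :: 'a" j] by (simp add: pochhammer_fact one_add_one)

lemma hyp2F0_eq_ideal_rate:
  assumes n: "0 < n"
  shows "hyp2F0 (- (real n - 1)) 2 (1 / real n) = ideal_rate n"
proof -
  let ?a = "real (n - 1)"
  have a: "- (real n - 1) = - ?a"
    using n by (simp add: of_nat_diff)
  let ?term = "\<lambda>j. pochhammer (- ?a) j * pochhammer 2 j / fact j * (1 / real n) ^ j"
  have "?term j = 0" if "j \<notin> {..<n}" for j
  proof -
    have "pochhammer (- ?a) j = 0"
      using that n by (subst pochhammer_of_nat_eq_0_iff) auto
    then show ?thesis by simp
  qed
  then have "hyp2F0 (- (real n - 1)) 2 (1 / real n) = (\<Sum>j<n. ?term j)"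
    unfolding hyp2F0_def a by (intro suminf_finite) auto
  also have "\<dots> = ideal_rate n"
  proof -
    have "?term j = real ((n - 1) choose j) * fact (j + 1) * (- 1 / real n) ^ j" for j
    proof -
      have binomial: "pochhammer (- ?a) j / fact j = (- 1) ^ j * real ((n - 1) choose j)"
        by (simp add: gbinomial_pochhammer binomial_gbinomial)
      have "?term j = pochhammer (- ?a) j / fact j * pochhammer 2 j * (1 / real n) ^ j"
        by simp
      also have "\<dots> = real ((n - 1) choose j) * fact (j + 1) * ((- 1) ^ j * (1 / real n) ^ j)"
        unfolding binomial pochhammer_two by (simp only: mult_ac)
      also have "(- 1) ^ j * (1 / real n) ^ j = (- 1 / real n) ^ j"
        by (simp flip: power_mult_distrib)
      finally show ?thesis .
    qed
    then show ?thesis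
      by (simp only: ideal_rate_def of_nat_fact)
  qed
  finally show ?thesis .
qed

section \<open>The limit\<close>

lemma has_bochner_integral_ideal_rate:
  assumes "0 < n"
  shows "has_bochner_integral lborel
    (\<lambda>x. x * exp (- x) * (1 - x / real n) ^ (n - 1) * indicator {0..} x) (ideal_rate n)"
proof -
  have "(1 - x / real n) ^ (n - 1) = (\<Sum>t<n. real ((n - 1) choose t) * (- 1 / real n) ^ t * x ^ t)" for x
  proof -
    have "{..n - 1} = {..<n}"
      using assms by auto
    moreover have "(- x / real n) ^ t = (- 1 / real n) ^ t * x ^ t" for t
      by (simp flip: power_mult_distrib)
    ultimately show ?thesis
      using binomial_ring[of "- x / real n" 1 "n - 1"] by (simp add: mult.assoc)
  qed
  then have integrand: "x * exp (- x) * (1 - x / real n) ^ (n - 1) * indicator {0..} x =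
      (\<Sum>t<n. real ((n - 1) choose t) * (- 1 / real n) ^ t * (x ^ (t + 1) * exp (- x) * indicator {0..} x))" for x
    by (simp add: sum_distrib_left sum_distrib_right mult_ac)
  have "has_bochner_integral lborel
      (\<lambda>x. \<Sum>t<n. real ((n - 1) choose t) * (- 1 / real n) ^ t * (x ^ (t + 1) * exp (- x) * indicator {0..} x))
      (\<Sum>t<n. real ((n - 1) choose t) * (- 1 / real n) ^ t * fact (t + 1))"
    by (intro has_bochner_integral_sum has_bochner_integral_mult_right has_bochner_integral_I0i_power_exp_m')
  moreover have "(\<Sum>t<n. real ((n - 1) choose t) * (- 1 / real n) ^ t * fact (t + 1)) = ideal_rate n"
    unfolding ideal_rate_def of_nat_fact by (simp only: mult_ac)
  ultimately show ?thesis
    unfolding integrand by simp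
qed

lemma has_bochner_integral_x_exp_scaled:
  fixes l :: real
  assumes "0 < l"
  shows "has_bochner_integral lborel (\<lambda>x. x * exp (- (l * x)) * indicator {0..} x) (1 / l\<^sup>2)"
proof -
  have "has_bochner_integral lborel (\<lambda>x. x ^ 1 * exp (- x) * indicator {0..} x :: real) 1"
    using has_bochner_integral_I0i_power_exp_m'[of 1] by simp
  then have "has_bochner_integral lborel (\<lambda>x. (l * x) * exp (- (l * x)) * indicator {0..} (l * x)) (1 / l)"
    using lborel_has_bochner_integral_real_affine_iff[where c = l and t = 0 and x = 1
        and f = "\<lambda>x. x * exp (- x) * indicator {0..} x"] assms
    by (simp add: inverse_eq_divide)
  moreover have "indicator {0..} (l * x) = (indicator {0..} x :: real)" for x
    using assms by (simp split: split_indicator add: zero_le_mult_iff)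
  ultimately have "has_bochner_integral lborel (\<lambda>x. l * (x * exp (- (l * x)) * indicator {0..} x)) (1 / l)"
    by (simp add: mult_ac)
  then have "has_bochner_integral lborel (\<lambda>x. 1 / l * (l * (x * exp (- (l * x)) * indicator {0..} x))) (1 / l * (1 / l))"
    by (rule has_bochner_integral_mult_right)
  then show ?thesis
    using assms by (simp add: power2_eq_square)
qed

lemma abs_one_minus_le_exp_half:
  fixes z :: real
  assumes "0 \<le> z"
  shows "\<bar>1 - z\<bar> \<le> exp (z / 2)"
proof -
  have "1 + z / 2 + (z / 2)\<^sup>2 / 2 \<le> exp (z / 2)"
    using assms by (intro exp_lower_Taylor_quadratic) simp
  moreover have "\<bar>1 - z\<bar> \<le> 1 + z / 2 + (z / 2)\<^sup>2 / 2"
  proof (cases "z \<le> 1")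
    case True
    have "0 \<le> (z / 2)\<^sup>2 / 2" by simp
    with True assms show ?thesis by linarith
  next
    case False
    have "0 \<le> (z / 2 - 1)\<^sup>2" by simp
    moreover have "(z / 2 - 1)\<^sup>2 = (z / 2)\<^sup>2 - z + 1"
      by (simp add: power2_diff)
    ultimately show ?thesis
      using False by linarith
  qed
  ultimately show ?thesis
    by linarith
qed

lemma abs_power_one_minus_div_le:
  fixes x :: real
  assumes "0 \<le> x"
  shows "\<bar>(1 - x / real n) ^ (n - 1)\<bar> \<le> exp (x / 2)"
proof (cases "n = 0")
  case False
  have "\<bar>(1 - x / real n) ^ (n - 1)\<bar> \<le> exp (x / real n / 2) ^ (n - 1)"
    unfolding power_abs using assms by (intro power_mono abs_one_minus_le_exp_half) auto
  also have "\<dots> = exp (real (n - 1) / real n * (x / 2))"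
    by (simp flip: exp_of_nat_mult)
  also have "\<dots> \<le> exp (x / 2)"
    using assms False by (intro exp_mono mult_left_le_one_le) auto
  finally show ?thesis .
qed (use assms in simp)

lemma tendsto_power_one_minus_div:
  fixes x :: real
  shows "(\<lambda>n. (1 - x / real n) ^ (n - 1)) \<longlonglongrightarrow> exp (- x)"
proof -
  have "(\<lambda>n. (1 - x / real n) ^ n / (1 - x / real n)) \<longlonglongrightarrow> exp (- x) / (1 - 0)"
    using tendsto_exp_limit_sequentially[of "- x"]
    by (intro tendsto_intros tendsto_divide_0[OF tendsto_const] filterlim_real_sequentially) simp_all
  moreover have "\<forall>\<^sub>F n in sequentially. (1 - x / real n) ^ n / (1 - x / real n) = (1 - x / real n) ^ (n - 1)"
  proof -
    obtain N :: nat where N: "\<bar>x\<bar> < real N"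
      using reals_Archimedean2 by blast
    have "(1 - x / real n) ^ n / (1 - x / real n) = (1 - x / real n) ^ (n - 1)" if "N \<le> n" for n
    proof -
      have "0 < n" "x \<noteq> real n"
        using N that by auto
      then have "1 - x / real n \<noteq> 0"
        by (simp add: field_simps)
      with \<open>0 < n\<close> show ?thesis
        by (simp add: power_eq_if)
    qed
    then show ?thesis
      by (auto simp: eventually_sequentially)
  qed
  ultimately show ?thesis
    by (simp add: tendsto_cong)
qed

lemma ideal_rate_tendsto: "ideal_rate \<longlonglongrightarrow> 1 / 4"
proof -
  let ?s = "\<lambda>n x. x * exp (- x) * (1 - x / real n) ^ (n - 1) * indicator {0..} x :: real"
  let ?limit = "\<lambda>x. x * exp (- (2 * x)) * indicator {0..} x :: real"
  let ?bound = "\<lambda>x. x * exp (- (1 / 2 * x)) * indicator {0..} x :: real"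
  have convergence: "(\<lambda>n. integral\<^sup>L lborel (?s n)) \<longlonglongrightarrow> integral\<^sup>L lborel ?limit"
  proof (rule integral_dominated_convergence[where w = ?bound])
    show "?limit \<in> borel_measurable lborel" "?s n \<in> borel_measurable lborel" for n
      by measurable
    show "integrable lborel ?bound"
      using has_bochner_integral_x_exp_scaled[of "1 / 2"] by (auto simp: has_bochner_integral_iff)
    have "(\<lambda>n. ?s n x) \<longlonglongrightarrow> x * exp (- x) * exp (- x) * indicator {0..} x" for x
      by (intro tendsto_intros tendsto_power_one_minus_div)
    moreover have "x * exp (- x) * exp (- x) * indicator {0..} x = ?limit x" for x
    proof -
      have "exp (- x) * exp (- x) = exp (- (2 * x))"
        by (simp flip: exp_add)
      then show ?thesis
        by (metis mult.assoc)
    qed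
    ultimately show "AE x in lborel. (\<lambda>n. ?s n x) \<longlonglongrightarrow> ?limit x"
      by simp
    have "norm (?s n x) \<le> ?bound x" if "0 \<le> x" for n x
    proof -
      have "norm (?s n x) = x * exp (- x) * \<bar>(1 - x / real n) ^ (n - 1)\<bar>"
        using that by (simp add: abs_mult)
      also have "\<dots> \<le> x * exp (- x) * exp (x / 2)"
        using that by (intro mult_left_mono abs_power_one_minus_div_le) auto
      also have "\<dots> = ?bound x"
        using that by (simp add: mult.assoc flip: exp_add)
      finally show ?thesis .
    qed
    then show "AE x in lborel. norm (?s n x) \<le> ?bound x" for n
      by (intro AE_I2) (auto split: split_indicator)
  qed
  have "integral\<^sup>L lborel (?s n) = ideal_rate n" if "0 < n" for n
    using has_bochner_integral_ideal_rate[OF that] by (simp add: has_bochner_integral_iff)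
  then have eventually_eq: "\<forall>\<^sub>F n in sequentially. integral\<^sup>L lborel (?s n) = ideal_rate n"
    by (rule eventually_mono[OF eventually_gt_at_top[of 0]])
  have limit: "integral\<^sup>L lborel ?limit = 1 / 4"
    using has_bochner_integral_x_exp_scaled[of 2] by (simp add: has_bochner_integral_iff power2_eq_square)
  show ?thesis
    using Lim_transform_eventually[OF convergence eventually_eq] unfolding limit .
qed

theorem theorem3:
  shows "(\<forall>n U. n > 2 \<longrightarrow> unitary_mat n U \<longrightarrow>
            (\<forall>k<n. U 0 k = complex_of_real (1 / sqrt (real n))) \<longrightarrow>
            heralding_rate n U =
              (-1 / real n) ^ (n - 1) * fact (n - 1) *
                (\<Sum>t<n. real (n - t) * (- real n) ^ t / fact t)
            \<and> heralding_rate n U = hyp2F0 (- (real n - 1)) 2 (1 / real n))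
       \<and> (\<forall>Us :: nat \<Rightarrow> nat \<Rightarrow> nat \<Rightarrow> complex.
            (\<forall>n>2. unitary_mat n (Us n) \<and>
                   (\<forall>k<n. Us n 0 k = complex_of_real (1 / sqrt (real n)))) \<longrightarrow>
            (\<lambda>n. heralding_rate n (Us n)) \<longlonglongrightarrow> 1 / 4)"
proof (intro conjI allI impI)
  fix n U
  assume "n > 2" "unitary_mat n U" "\<forall>k<n. U 0 k = complex_of_real (1 / sqrt (real n))"
  then have n: "0 < n" and rate: "heralding_rate n U = ideal_rate n"
    by (auto intro: heralding_rate_flat_row)
  show "heralding_rate n U =
      (-1 / real n) ^ (n - 1) * fact (n - 1) * (\<Sum>t<n. real (n - t) * (- real n) ^ t / fact t)"
    unfolding rate by (rule ideal_rate_closed_form[OF n])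
  show "heralding_rate n U = hyp2F0 (- (real n - 1)) 2 (1 / real n)"
    unfolding rate by (rule hyp2F0_eq_ideal_rate[OF n, symmetric])
next
  fix Us :: "nat \<Rightarrow> nat \<Rightarrow> nat \<Rightarrow> complex"
  assume "\<forall>n>2. unitary_mat n (Us n) \<and> (\<forall>k<n. Us n 0 k = complex_of_real (1 / sqrt (real n)))"
  then have "heralding_rate n (Us n) = ideal_rate n" if "n > 2" for n
    using that by (intro heralding_rate_flat_row) auto
  then have "\<forall>\<^sub>F n in sequentially. ideal_rate n = heralding_rate n (Us n)"
    by (auto intro: eventually_mono[OF eventually_gt_at_top[of 2]])
  with ideal_rate_tendsto show "(\<lambda>n. heralding_rate n (Us n)) \<longlonglongrightarrow> 1 / 4"
    by (rule Lim_transform_eventually)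
qed

end
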